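(* Consider an interventional factor model (IFM) with factor structure $\{(S_k, F_k)\}_{k=1}^{l}$ over intervention variables $\sigma = (\sigma_1, \dots, \sigma_d)$, and suppose its $\sigma$-graph $\mathcal G_{\sigma}$ is decomposable. Let $\Sigma_{\mathrm{train}} \subseteq \Sigma$ satisfy the following. For every $k \in \{1, \dots, l\}$ and every assignment $v \in \prod_{i \in F_k} \{0, 1, \dots, \aleph_i - 1\}$, the regime $\sigma$ with $\sigma_{F_k} = v$ and $\sigma_i = 0$ for all $i \notin F_k$ belongs to $\Sigma_{\mathrm{train}}$. Then, for every $\sigma^\star \in \Sigma$, the distribution $p(\cdot\,; \sigma^\star)$ is identified from $\{p(\cdot\,; \sigma) : \sigma \in \Sigma_{\mathrm{train}}\}$.
   Context: **Regimes.** There are $d$ intervention variables $\sigma_1, \dots, \sigma_d$. These are non-random regime indicators. Each $\sigma_i$ takes values in $\{0, 1, \dots, \aleph_i - 1\}$, where $\aleph_i \ge 2$ and the value $0$ denotes the baseline, i.e. no intervention. The regime space is $\Sigma = \prod_{i=1}^d \{0, \dots, \aleph_i - 1\}$. For $A \subseteq [d] = \{1, \dots, d\}$, write $\sigma_A = (\sigma_i)_{i \in A}$. **The random system.** $X = (X_1, \dots, X_m)$ is a random vector with sample space $\mathcal X$. For $S \subseteq [m]$, write $x_S = (x_j)_{j \in S}$. **Interventional factor model (IFM).** An IFM with factor structure $\{(S_k, F_k)\}_{k=1}^l$, where $S_k \subseteq [m]$ and $F_k \subseteq [d]$, is a family of distributions $\{p(\cdot\,; \sigma) : \sigma \in \Sigma\}$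 on $\mathcal X$ whose densities (or probability mass functions) satisfy $$p(x; \sigma) = \frac{1}{Z(\sigma)} \prod_{k=1}^l f_k(x_{S_k}; \sigma_{F_k}).$$ Here each $f_k$ is a strictly positive function of $(x_{S_k}, \sigma_{F_k})$, and $Z(\sigma) \in (0, \infty)$ is the normalizing constant. **$\sigma$-graph.** The $\sigma$-graph $\mathcal G_\sigma$ is the undirected graph with vertex set $\{\sigma_1, \dots, \sigma_d\}$. It has an edge $\sigma_i - \sigma_j$ ($i \ne j$) if and only if $\{i, j\} \subseteq F_k$ for some $k$. **Decomposable graphs.** An undirected graph is decomposable if it is complete, or if its vertex set can be partitioned into $(A, B, C)$ with $A, B$ nonempty, $C$ a clique separating $A$ from $B$, and the induced subgraphs on $A \cup C$ and $B \cup C$ both decomposable. **Identification.** $p(\cdot\,; \sigma^\star)$ is identified from $\Sigma_{\mathrm{train}}$ if the following holds for any two IFMs $p, p'$ with the same factor structure: whenever $p(\cdot\,; \sigma) = p'(\cdot\,; \sigma)$ for all $\sigma \in \Sigma_{\mathrm{train}}$, then $p(\cdot\,; \sigma^\star) = p'(\cdot\,; \sigma^\star)$. *)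

theory Defs
  imports "HOL-Analysis.Analysis"
begin

definition regimes :: "nat \<Rightarrow> (nat \<Rightarrow> nat) \<Rightarrow> (nat \<Rightarrow> nat) set" where
  "regimes d aleph = {\<sigma>. \<forall>i. (i \<in> {1..d} \<longrightarrow> \<sigma> i < aleph i) \<and> (i \<notin> {1..d} \<longrightarrow> \<sigma> i = 0)}"

text \<open>Interventional factor model: p sigma x is the density (w.r.t. base measure M on the sample
  space, space M) of X under regime sigma.  Sample points x :: nat => 'a, x_S = restrict x S.\<close>
definition is_IFM ::
  "(nat \<Rightarrow> 'a) measure \<Rightarrow> nat \<Rightarrow> nat \<Rightarrow> (nat \<Rightarrow> nat) \<Rightarrow> nat \<Rightarrow> (nat \<Rightarrow> nat set) \<Rightarrow> (nat \<Rightarrow> nat set)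
   \<Rightarrow> ((nat \<Rightarrow> nat) \<Rightarrow> (nat \<Rightarrow> 'a) \<Rightarrow> real) \<Rightarrow> bool" where
  "is_IFM M m d aleph l S F p \<longleftrightarrow>
     (\<exists>(f :: nat \<Rightarrow> (nat \<Rightarrow> 'a) \<Rightarrow> (nat \<Rightarrow> nat) \<Rightarrow> real) (Z :: (nat \<Rightarrow> nat) \<Rightarrow> real).
        \<forall>\<sigma> \<in> regimes d aleph.
          0 < Z \<sigma> \<and>
          (\<forall>k \<in> {1..l}. \<forall>x \<in> space M. 0 < f k (restrict x (S k)) (restrict \<sigma> (F k))) \<and>
          (\<forall>k \<in> {1..l}. (\<lambda>x. f k (restrict x (S k)) (restrict \<sigma> (F k))) \<in> borel_measurable M) \<and>
          (\<integral>\<^sup>+ x. ennreal (\<Prod>k\<in>{1..l}. f k (restrict x (S k)) (restrict \<sigma> (F k))) \<partial>M) = ennreal (Z \<sigma>) \<and>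
          (\<forall>x \<in> space M. p \<sigma> x = (\<Prod>k\<in>{1..l}. f k (restrict x (S k)) (restrict \<sigma> (F k))) / Z \<sigma>))"

definition valid_structure :: "nat \<Rightarrow> nat \<Rightarrow> (nat \<Rightarrow> nat) \<Rightarrow> nat \<Rightarrow> (nat \<Rightarrow> nat set) \<Rightarrow> (nat \<Rightarrow> nat set) \<Rightarrow> bool" where
  "valid_structure m d aleph l S F \<longleftrightarrow>
     (\<forall>i \<in> {1..d}. 2 \<le> aleph i) \<and> (\<forall>k \<in> {1..l}. S k \<subseteq> {1..m} \<and> F k \<subseteq> {1..d})"

definition identified ::
  "(nat \<Rightarrow> 'a) measure \<Rightarrow> nat \<Rightarrow> nat \<Rightarrow> (nat \<Rightarrow> nat) \<Rightarrow> nat \<Rightarrow> (nat \<Rightarrow> nat set) \<Rightarrow> (nat \<Rightarrow> nat set)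
   \<Rightarrow> (nat \<Rightarrow> nat) set \<Rightarrow> (nat \<Rightarrow> nat) \<Rightarrow> bool" where
  "identified M m d aleph l S F Strain \<sigma>s \<longleftrightarrow>
     (\<forall>p p'. is_IFM M m d aleph l S F p \<longrightarrow> is_IFM M m d aleph l S F p' \<longrightarrow>
        (\<forall>\<sigma> \<in> Strain. \<forall>x \<in> space M. p \<sigma> x = p' \<sigma> x) \<longrightarrow>
        (\<forall>x \<in> space M. p \<sigma>s x = p' \<sigma>s x))"

definition sigma_edge :: "nat \<Rightarrow> (nat \<Rightarrow> nat set) \<Rightarrow> nat \<Rightarrow> nat \<Rightarrow> bool" where
  "sigma_edge l F i j \<longleftrightarrow> i \<noteq> j \<and> (\<exists>k \<in> {1..l}. {i, j} \<subseteq> F k)"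

text \<open>Undirected graphs given by a symmetric edge relation E, with vertex set V (induced subgraph).\<close>
definition is_clique :: "('v \<Rightarrow> 'v \<Rightarrow> bool) \<Rightarrow> 'v set \<Rightarrow> bool" where
  "is_clique E C \<longleftrightarrow> (\<forall>i \<in> C. \<forall>j \<in> C. i \<noteq> j \<longrightarrow> E i j)"

definition is_path :: "('v \<Rightarrow> 'v \<Rightarrow> bool) \<Rightarrow> 'v set \<Rightarrow> 'v list \<Rightarrow> bool" where
  "is_path E V xs \<longleftrightarrow> xs \<noteq> [] \<and> set xs \<subseteq> V \<and> (\<forall>i < length xs - 1. E (xs ! i) (xs ! Suc i))"

definition separates :: "('v \<Rightarrow> 'v \<Rightarrow> bool) \<Rightarrow> 'v set \<Rightarrow> 'v set \<Rightarrow> 'v set \<Rightarrow> 'v set \<Rightarrow> bool" where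
  "separates E V C A B \<longleftrightarrow>
     (\<forall>xs. is_path E V xs \<longrightarrow> hd xs \<in> A \<longrightarrow> last xs \<in> B \<longrightarrow> set xs \<inter> C \<noteq> {})"

inductive decomposable :: "('v \<Rightarrow> 'v \<Rightarrow> bool) \<Rightarrow> 'v set \<Rightarrow> bool" for E where
  complete: "is_clique E V \<Longrightarrow> decomposable E V"
| split: "\<lbrakk> V = A \<union> B \<union> C; A \<inter> B = {}; A \<inter> C = {}; B \<inter> C = {};
            A \<noteq> {}; B \<noteq> {}; is_clique E C; separates E V C A B;
            decomposable E (A \<union> C); decomposable E (B \<union> C) \<rbrakk> \<Longrightarrow> decomposable E V"

end

theory Submission
  imports Defs
begin

text \<open>Fix two IFMs with the same factor structure that agree on the training regimes, and a
  reference point \<open>x\<^sub>0\<close>. For fixed \<open>x\<close>, the centred log-ratio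
  \<open>(log p' - log p)(x; \<sigma>) - (log p' - log p)(x\<^sub>0; \<sigma>)\<close> is a sum of terms each depending on
  \<open>\<sigma>\<^sub>F\<^sub>k\<close> only, and it vanishes on every regime supported inside a single \<open>F\<^sub>k\<close>, because
  those regimes are training regimes. Inclusion-exclusion over the support of \<open>\<sigma>\<close> shows that
  such a sum vanishes on all regimes. Hence \<open>p'(\<cdot>; \<sigma>\<^sup>\<star>)\<close> is a constant multiple of
  \<open>p(\<cdot>; \<sigma>\<^sup>\<star>)\<close>, and since both integrate to one, they coincide.\<close>

definition zero_outside :: "'i set \<Rightarrow> ('i \<Rightarrow> 'b::zero) \<Rightarrow> 'i \<Rightarrow> 'b" where
  "zero_outside T \<sigma> = (\<lambda>i. if i \<in> T then \<sigma> i else 0)"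

lemma alternating_sum_Pow_eq_0:
  fixes g :: "'a set \<Rightarrow> 'b::comm_ring_1"
  assumes "finite U" "i \<in> U"
    and insert_invariant: "\<And>T. T \<subseteq> U - {i} \<Longrightarrow> g (insert i T) = g T"
  shows "(\<Sum>T\<in>Pow U. (-1) ^ card (U - T) * g T) = 0"
proof -
  let ?V = "U - {i}"
  let ?t = "\<lambda>T. (-1) ^ card (U - T) * g T"
  have U: "U = insert i ?V" using assms(2) by auto
  have "(\<Sum>T\<in>Pow U. ?t T) = (\<Sum>T\<in>Pow ?V. ?t T) + (\<Sum>T\<in>insert i ` Pow ?V. ?t T)"
    by (subst U, subst Pow_insert, rule sum.union_disjoint) (use assms(1) in auto)
  also have "(\<Sum>T\<in>insert i ` Pow ?V. ?t T) = (\<Sum>T\<in>Pow ?V. ?t (insert i T))"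
    by (rule sum.reindex_cong[where l = "insert i"]) (auto intro!: inj_onI)
  also have "\<dots> = (\<Sum>T\<in>Pow ?V. - ?t T)"
  proof (rule sum.cong)
    fix T assume T: "T \<in> Pow ?V"
    have "U - T = insert i (U - insert i T)" "i \<notin> U - insert i T"
      using T assms(2) by auto
    then have "card (U - T) = Suc (card (U - insert i T))"
      using assms(1) by (metis card_insert_disjoint finite_Diff)
    then show "?t (insert i T) = - ?t T"
      using insert_invariant T by simp
  qed simp
  finally show ?thesis by (simp add: sum_negf)
qed

lemma sum_local_terms_eq_0:
  fixes h :: "'k \<Rightarrow> ('i \<Rightarrow> 'b::zero) \<Rightarrow> real"
  assumes "finite K"
    and closed: "\<And>\<sigma> T. \<sigma> \<in> R \<Longrightarrow> zero_outside T \<sigma> \<in> R"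
    and finite_support: "\<And>\<sigma>. \<sigma> \<in> R \<Longrightarrow> finite {i. \<sigma> i \<noteq> 0}"
    and local_zero: "\<And>\<sigma> k. \<sigma> \<in> R \<Longrightarrow> k \<in> K \<Longrightarrow> {i. \<sigma> i \<noteq> 0} \<subseteq> F k
       \<Longrightarrow> (\<Sum>k\<in>K. h k (restrict \<sigma> (F k))) = 0"
    and "\<sigma> \<in> R"
  shows "(\<Sum>k\<in>K. h k (restrict \<sigma> (F k))) = 0"
  using \<open>\<sigma> \<in> R\<close>
proof (induction "card {i. \<sigma> i \<noteq> 0}" arbitrary: \<sigma> rule: less_induct)
  case less
  let ?H = "\<lambda>\<sigma>. \<Sum>k\<in>K. h k (restrict \<sigma> (F k))"
  let ?U = "{i. \<sigma> i \<noteq> 0}"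
  let ?a = "\<lambda>T. (-1::real) ^ card (?U - T)"
  have fin: "finite ?U" using finite_support less.prems .
  show ?case
  proof (cases "\<exists>k\<in>K. ?U \<subseteq> F k")
    case True
    then show ?thesis using local_zero less.prems by blast
  next
    case False
    have proper: "?H (zero_outside T \<sigma>) = 0" if "T \<subset> ?U" for T
    proof (rule less.hyps)
      have "{i. zero_outside T \<sigma> i \<noteq> 0} = T"
        using that by (auto simp: zero_outside_def)
      then show "card {i. zero_outside T \<sigma> i \<noteq> 0} < card ?U"
        using that fin by (simp add: psubset_card_mono)
    qed (rule closed[OF less.prems])
    txt \<open>Inclusion-exclusion over the support \<open>?U\<close>: for each \<open>k\<close> some point of \<open>?U\<close>
      lies outside \<open>F k\<close>, so the \<open>k\<close>-th alternating sum vanishes.\<close>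
    have "0 = (\<Sum>k\<in>K. \<Sum>T\<in>Pow ?U. ?a T * h k (restrict (zero_outside T \<sigma>) (F k)))"
    proof (rule sym, rule sum.neutral, rule ballI)
      fix k assume "k \<in> K"
      then obtain i where i: "i \<in> ?U" "i \<notin> F k" using False by blast
      then have "h k (restrict (zero_outside (insert i T) \<sigma>) (F k))
          = h k (restrict (zero_outside T \<sigma>) (F k))" for T by (intro arg_cong[where f = "h k"]) (auto simp: restrict_def zero_outside_def)
      with fin i show "(\<Sum>T\<in>Pow ?U. ?a T * h k (restrict (zero_outside T \<sigma>) (F k))) = 0"
        by (intro alternating_sum_Pow_eq_0)
    qed
    also have "\<dots> = (\<Sum>T\<in>Pow ?U. ?a T * ?H (zero_outside T \<sigma>))"
      by (simp only: sum_distrib_left) (rule sum.swap)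
    also have "\<dots> = ?a ?U * ?H (zero_outside ?U \<sigma>)
        + (\<Sum>T\<in>Pow ?U - {?U}. ?a T * ?H (zero_outside T \<sigma>))"
      using fin by (intro sum.remove) auto
    also have "\<dots> = ?H \<sigma>"
    proof -
      have "zero_outside ?U \<sigma> = \<sigma>"
        by (auto simp: zero_outside_def)
      moreover have "(\<Sum>T\<in>Pow ?U - {?U}. ?a T * ?H (zero_outside T \<sigma>)) = 0"
        using proper by (intro sum.neutral) auto
      ultimately show ?thesis by simp
    qed
    finally show ?thesis by simp
  qed
qed

lemma zero_outside_regimes: "\<sigma> \<in> regimes d aleph \<Longrightarrow> zero_outside T \<sigma> \<in> regimes d aleph"
  by (auto simp: regimes_def zero_outside_def)

lemma regimes_finite_support:
  assumes "\<sigma> \<in> regimes d aleph"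
  shows "finite {i. \<sigma> i \<noteq> 0}"
proof (rule finite_subset)
  show "{i. \<sigma> i \<noteq> 0} \<subseteq> {1..d}"
  proof
    fix i assume "i \<in> {i. \<sigma> i \<noteq> 0}"
    with assms show "i \<in> {1..d}"
      unfolding regimes_def by (cases "i \<in> {1..d}") auto
  qed
qed simp

lemma regime_supported_in_factor_training:
  assumes "valid_structure m d aleph l S F"
    and "\<forall>k \<in> {1..l}. \<forall>v. (\<forall>i \<in> F k. v i < aleph i) \<longrightarrow>
           (\<lambda>i. if i \<in> F k then v i else 0) \<in> Strain"
    and "\<sigma> \<in> regimes d aleph" "k \<in> {1..l}" "{i. \<sigma> i \<noteq> 0} \<subseteq> F k"
  shows "\<sigma> \<in> Strain"
proof -
  have "\<forall>i \<in> F k. \<sigma> i < aleph i"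
    using assms(1,3,4) unfolding valid_structure_def regimes_def by blast
  then have "(\<lambda>i. if i \<in> F k then \<sigma> i else 0) \<in> Strain"
    using assms(2,4) by blast
  moreover have "(\<lambda>i. if i \<in> F k then \<sigma> i else 0) = \<sigma>"
    using assms(5) by (auto simp: fun_eq_iff)
  ultimately show ?thesis by simp
qed

lemma proportional_probability_densities_eq:
  assumes "f \<in> borel_measurable M" "(\<integral>\<^sup>+ x. ennreal (f x) \<partial>M) = 1"
    "(\<integral>\<^sup>+ x. ennreal (g x) \<partial>M) = 1"
    "0 \<le> c" "\<And>x. x \<in> space M \<Longrightarrow> g x = c * f x" "\<And>x. x \<in> space M \<Longrightarrow> 0 \<le> f x"
  shows "c = 1"
proof -
  have "1 = (\<integral>\<^sup>+ x. ennreal c * ennreal (f x) \<partial>M)"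
    unfolding assms(3)[symmetric] using assms(4-6)
    by (intro nn_integral_cong) (simp add: ennreal_mult)
  also have "\<dots> = ennreal c"
    using assms(1,2) by (simp add: nn_integral_cmult)
  finally show ?thesis
    using assms(4) by simp
qed

definition IFM_factorization ::
  "(nat \<Rightarrow> 'a) measure \<Rightarrow> nat \<Rightarrow> (nat \<Rightarrow> nat) \<Rightarrow> nat \<Rightarrow> (nat \<Rightarrow> nat set) \<Rightarrow> (nat \<Rightarrow> nat set)
   \<Rightarrow> ((nat \<Rightarrow> nat) \<Rightarrow> (nat \<Rightarrow> 'a) \<Rightarrow> real)
   \<Rightarrow> (nat \<Rightarrow> (nat \<Rightarrow> 'a) \<Rightarrow> (nat \<Rightarrow> nat) \<Rightarrow> real) \<Rightarrow> ((nat \<Rightarrow> nat) \<Rightarrow> real) \<Rightarrow> bool" where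
  "IFM_factorization M d aleph l S F p f Z \<longleftrightarrow>
     (\<forall>\<sigma> \<in> regimes d aleph.
        0 < Z \<sigma> \<and>
        (\<forall>k \<in> {1..l}. \<forall>x \<in> space M. 0 < f k (restrict x (S k)) (restrict \<sigma> (F k))) \<and>
        (\<forall>k \<in> {1..l}. (\<lambda>x. f k (restrict x (S k)) (restrict \<sigma> (F k))) \<in> borel_measurable M) \<and>
        (\<integral>\<^sup>+ x. ennreal (\<Prod>k\<in>{1..l}. f k (restrict x (S k)) (restrict \<sigma> (F k))) \<partial>M) = ennreal (Z \<sigma>) \<and>
        (\<forall>x \<in> space M. p \<sigma> x = (\<Prod>k\<in>{1..l}. f k (restrict x (S k)) (restrict \<sigma> (F k))) / Z \<sigma>))"

lemma is_IFM_iff_factorization: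
  "is_IFM M m d aleph l S F p \<longleftrightarrow> (\<exists>f Z. IFM_factorization M d aleph l S F p f Z)"
  unfolding is_IFM_def IFM_factorization_def ..

lemma IFM_factorizationD:
  assumes "IFM_factorization M d aleph l S F p f Z" "\<sigma> \<in> regimes d aleph"
  shows "0 < Z \<sigma>"
    "\<And>k x. k \<in> {1..l} \<Longrightarrow> x \<in> space M \<Longrightarrow> 0 < f k (restrict x (S k)) (restrict \<sigma> (F k))"
    "\<And>k. k \<in> {1..l} \<Longrightarrow> (\<lambda>x. f k (restrict x (S k)) (restrict \<sigma> (F k))) \<in> borel_measurable M"
    "(\<integral>\<^sup>+ x. ennreal (\<Prod>k\<in>{1..l}. f k (restrict x (S k)) (restrict \<sigma> (F k))) \<partial>M) = ennreal (Z \<sigma>)"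
    "\<And>x. x \<in> space M \<Longrightarrow> p \<sigma> x = (\<Prod>k\<in>{1..l}. f k (restrict x (S k)) (restrict \<sigma> (F k))) / Z \<sigma>"
  using assms unfolding IFM_factorization_def by blast+

lemma IFM_factorization_prod_pos:
  assumes "IFM_factorization M d aleph l S F p f Z" "\<sigma> \<in> regimes d aleph" "x \<in> space M"
  shows "0 < (\<Prod>k\<in>{1..l}. f k (restrict x (S k)) (restrict \<sigma> (F k)))"
  using IFM_factorizationD(2)[OF assms(1,2) _ assms(3)] by (rule prod_pos)

lemma IFM_factorization_density_pos:
  assumes "IFM_factorization M d aleph l S F p f Z" "\<sigma> \<in> regimes d aleph" "x \<in> space M"
  shows "0 < p \<sigma> x"
  using IFM_factorizationD(1,5)[OF assms(1,2)] IFM_factorization_prod_pos[OF assms] assms(3)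
  by simp

lemma IFM_factorization_log_density:
  assumes "IFM_factorization M d aleph l S F p f Z" "\<sigma> \<in> regimes d aleph" "x \<in> space M"
  shows "ln (p \<sigma> x) = (\<Sum>k\<in>{1..l}. ln (f k (restrict x (S k)) (restrict \<sigma> (F k)))) - ln (Z \<sigma>)"
proof -
  have "ln (p \<sigma> x) = ln (\<Prod>k\<in>{1..l}. f k (restrict x (S k)) (restrict \<sigma> (F k))) - ln (Z \<sigma>)"
    unfolding IFM_factorizationD(5)[OF assms(1,2,3)]
    using IFM_factorization_prod_pos[OF assms] IFM_factorizationD(1)[OF assms(1,2)]
    by (rule ln_divide_pos)
  also have "ln (\<Prod>k\<in>{1..l}. f k (restrict x (S k)) (restrict \<sigma> (F k)))
      = (\<Sum>k\<in>{1..l}. ln (f k (restrict x (S k)) (restrict \<sigma> (F k))))"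
    using IFM_factorizationD(2)[OF assms(1,2) _ assms(3)] by (intro ln_prod) force+
  finally show ?thesis .
qed

lemma IFM_factorization_density_integral:
  assumes "IFM_factorization M d aleph l S F p f Z" "\<sigma> \<in> regimes d aleph"
  shows "p \<sigma> \<in> borel_measurable M" "(\<integral>\<^sup>+ x. ennreal (p \<sigma> x) \<partial>M) = 1"
proof -
  define P where "P x = (\<Prod>k\<in>{1..l}. f k (restrict x (S k)) (restrict \<sigma> (F k)))" for x
  note D = IFM_factorizationD[OF assms]
  have Z: "0 < Z \<sigma>" and int: "(\<integral>\<^sup>+ x. ennreal (P x) \<partial>M) = Z \<sigma>"
    and dens: "\<And>x. x \<in> space M \<Longrightarrow> p \<sigma> x = P x / Z \<sigma>"
    using D(1,4,5) by (simp_all add: P_def)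
  have P_meas: "P \<in> borel_measurable M"
    unfolding P_def using D(3) by (rule borel_measurable_prod)
  have "(\<lambda>x. P x / Z \<sigma>) \<in> borel_measurable M"
    using P_meas by simp
  then show "p \<sigma> \<in> borel_measurable M"
    by (rule measurable_cong[THEN iffD1, rotated]) (simp add: dens)
  have "(\<integral>\<^sup>+ x. ennreal (p \<sigma> x) \<partial>M) = (\<integral>\<^sup>+ x. ennreal (1 / Z \<sigma>) * ennreal (P x) \<partial>M)"
    using Z by (intro nn_integral_cong) (simp add: dens ennreal_mult'[symmetric])
  also have "\<dots> = ennreal (1 / Z \<sigma>) * ennreal (Z \<sigma>)"
    using P_meas int by (simp add: nn_integral_cmult)
  finally show "(\<integral>\<^sup>+ x. ennreal (p \<sigma> x) \<partial>M) = 1"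
    using Z by (simp add: ennreal_mult'[symmetric])
qed

lemma IFM_log_ratio_constant:
  assumes fact: "IFM_factorization M d aleph l S F p f Z"
    and fact': "IFM_factorization M d aleph l S F p' f' Z'"
    and agree_local: "\<And>\<sigma> k x. \<sigma> \<in> regimes d aleph \<Longrightarrow> k \<in> {1..l} \<Longrightarrow>
       {i. \<sigma> i \<noteq> 0} \<subseteq> F k \<Longrightarrow> x \<in> space M \<Longrightarrow> p \<sigma> x = p' \<sigma> x"
    and "\<sigma> \<in> regimes d aleph" "x \<in> space M" "x\<^sub>0 \<in> space M"
  shows "ln (p' \<sigma> x) - ln (p \<sigma> x) = ln (p' \<sigma> x\<^sub>0) - ln (p \<sigma> x\<^sub>0)"
proof -
  define D where "D \<sigma> = (ln (p' \<sigma> x) - ln (p \<sigma> x)) - (ln (p' \<sigma> x\<^sub>0) - ln (p \<sigma> x\<^sub>0))" for \<sigma>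
  define h where "h k \<tau> = (ln (f' k (restrict x (S k)) \<tau>) - ln (f k (restrict x (S k)) \<tau>))
       - (ln (f' k (restrict x\<^sub>0 (S k)) \<tau>) - ln (f k (restrict x\<^sub>0 (S k)) \<tau>))" for k \<tau>
  have D_local: "D \<sigma> = (\<Sum>k\<in>{1..l}. h k (restrict \<sigma> (F k)))" if "\<sigma> \<in> regimes d aleph" for \<sigma>
    using that \<open>x \<in> space M\<close> \<open>x\<^sub>0 \<in> space M\<close>
    by (simp add: D_def h_def IFM_factorization_log_density[OF fact]
        IFM_factorization_log_density[OF fact'] sum_subtractf)
  have "(\<Sum>k\<in>{1..l}. h k (restrict \<sigma> (F k))) = 0"
  proof (rule sum_local_terms_eq_0[where R = "regimes d aleph"])
    fix \<tau> k assume "\<tau> \<in> regimes d aleph" "k \<in> {1..l}" "{i. \<tau> i \<noteq> 0} \<subseteq> F k"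
    with agree_local \<open>x \<in> space M\<close> \<open>x\<^sub>0 \<in> space M\<close> have "D \<tau> = 0"
      by (simp add: D_def)
    with D_local \<open>\<tau> \<in> _\<close> show "(\<Sum>k\<in>{1..l}. h k (restrict \<tau> (F k))) = 0"
      by simp
  qed (use assms(4) zero_outside_regimes regimes_finite_support in auto)
  with D_local[OF assms(4)] show ?thesis
    by (simp add: D_def)
qed

lemma IFM_factorizations_eq_if_agree_local:
  assumes fact: "IFM_factorization M d aleph l S F p f Z"
    and fact': "IFM_factorization M d aleph l S F p' f' Z'"
    and agree_local: "\<And>\<sigma> k x. \<sigma> \<in> regimes d aleph \<Longrightarrow> k \<in> {1..l} \<Longrightarrow>
       {i. \<sigma> i \<noteq> 0} \<subseteq> F k \<Longrightarrow> x \<in> space M \<Longrightarrow> p \<sigma> x = p' \<sigma> x"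
    and \<sigma>: "\<sigma> \<in> regimes d aleph" and x: "x \<in> space M"
  shows "p \<sigma> x = p' \<sigma> x"
proof -
  note pos = IFM_factorization_density_pos[OF fact \<sigma>]
    and pos' = IFM_factorization_density_pos[OF fact' \<sigma>]
  define c where "c = p' \<sigma> x / p \<sigma> x"
  have proportional: "p' \<sigma> y = c * p \<sigma> y" if "y \<in> space M" for y
  proof -
    have "ln (p' \<sigma> y / p \<sigma> y) = ln c"
      using IFM_log_ratio_constant[OF fact fact' agree_local \<sigma> that x] pos pos' that x
      by (simp add: c_def ln_divide_pos)
    then have "p' \<sigma> y / p \<sigma> y = c"
      using pos pos' that x by (simp add: c_def)
    then show ?thesis
      using pos[OF that] by (simp add: field_simps)
  qed
  have "c = 1"
  proof (rule proportional_probability_densities_eq[of "p \<sigma>" M "p' \<sigma>" c])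
    show "p \<sigma> \<in> borel_measurable M" "(\<integral>\<^sup>+ x. ennreal (p \<sigma> x) \<partial>M) = 1"
      "(\<integral>\<^sup>+ x. ennreal (p' \<sigma> x) \<partial>M) = 1"
      using IFM_factorization_density_integral[OF fact \<sigma>]
        IFM_factorization_density_integral[OF fact' \<sigma>] by blast+
    show "0 \<le> c"
      using pos[OF x] pos'[OF x] by (simp add: c_def)
  qed (use proportional pos in \<open>auto intro: less_imp_le\<close>)
  then show ?thesis
    using pos x by (simp add: c_def)
qed

theorem theorem1:
  fixes M :: "(nat \<Rightarrow> 'a) measure"
    and m d l :: nat
    and aleph :: "nat \<Rightarrow> nat"
    and S F :: "nat \<Rightarrow> nat set"
    and Strain :: "(nat \<Rightarrow> nat) set"
    and \<sigma>s :: "nat \<Rightarrow> nat"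
  assumes "valid_structure m d aleph l S F"
    and "decomposable (sigma_edge l F) {1..d}"
    and "Strain \<subseteq> regimes d aleph"
    and "\<forall>k \<in> {1..l}. \<forall>v. (\<forall>i \<in> F k. v i < aleph i) \<longrightarrow>
           (\<lambda>i. if i \<in> F k then v i else 0) \<in> Strain"
    and "\<sigma>s \<in> regimes d aleph"
  shows "identified M m d aleph l S F Strain \<sigma>s"
  unfolding identified_def
proof (intro allI impI ballI)
  fix p p' x
  assume "is_IFM M m d aleph l S F p" "is_IFM M m d aleph l S F p'"
    and agree: "\<forall>\<sigma> \<in> Strain. \<forall>x \<in> space M. p \<sigma> x = p' \<sigma> x" and "x \<in> space M"
  then obtain f Z f' Z' where "IFM_factorization M d aleph l S F p f Z"
    and "IFM_factorization M d aleph l S F p' f' Z'"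
    unfolding is_IFM_iff_factorization by blast
  moreover have "p \<sigma> y = p' \<sigma> y" if "\<sigma> \<in> regimes d aleph" "k \<in> {1..l}"
    "{i. \<sigma> i \<noteq> 0} \<subseteq> F k" "y \<in> space M" for \<sigma> k y
    using agree regime_supported_in_factor_training[OF assms(1,4) that(1-3)] that(4) by blast
  ultimately show "p \<sigma>s x = p' \<sigma>s x"
    using assms(5) \<open>x \<in> space M\<close> by (rule IFM_factorizations_eq_if_agree_local)
qed

end
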